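(* Let $G$ be the subgroup of $\mathrm{PSL}_2(\mathbb{Z})$ freely generated by $S_0$, $S_1$ (of order $2$) and $R_2$ (of order $3$) as in the context, with characters $\alpha_0$, $\chi$. Up to isomorphism of representations, the nonsplit indecomposable rank $2$ representations $\rho$ of $G$ containing a copy of the trivial representation (i.e. nonsplit extensions $0\to1\to\rho\to\phi\to0$ of a character $\phi$ by the trivial character) are exactly the following: (1) a single extension $0\to1\to\rho\to\chi^3\to0$, given by $\rho(S_0)=\begin{pmatrix}1&1\\0&-1\end{pmatrix}$, $\rho(S_1)=\begin{pmatrix}1&0\\0&-1\end{pmatrix}$, $\rho(R_2)=\begin{pmatrix}1&0\\0&1\end{pmatrix}$; (2) for each $a\in\{1,5\}$, an infinite family of pairwise nonisomorphic representations parameterized by $\mathbb{P}^1$, arising from extensions $0\to1\to\rho\to\chi^{-a}\to0$, given for $z\in\mathbb{C}$ by $\rho(S_0)=\begin{pmatrix}1&1\\0&-1\end{pmatrix}$, $\rho(S_1)=\begin{pmatrix}1&z\\0&-1\end{pmatrix}$, $\rho(R_2)=\begin{pmatrix}1&0\\0&\zeta^a\end{pmatrix}$, and for $z=\infty$ by $\rho(S_0)=\begin{pmatrix}1&0\\0&-1\end{pmatrix}$, $\rho(S_1)=\begin{pmatrix}1&1\\0&-1\end{pmatrix}$, $\rho(R_2)=\begin{pmatrix}1&0\\0&\zeta^a\end{pmatrix}$; (3) for each $a\in\{2,4\}$, one extension $0\to1\to\rho\to\alpha_0\chi^{-a}\to0$, given by $\rho(S_0)=\begin{pmatrix}1&1\\0&-1\end{pmatrix}$,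 $\rho(S_1)=\begin{pmatrix}1&0\\0&1\end{pmatrix}$, $\rho(R_2)=\begin{pmatrix}1&0\\0&\zeta^a\end{pmatrix}$; (4) for each $a\in\{1,5\}$, one extension $0\to1\to\rho\to\alpha_0\chi^{-a}\to0$, given by $\rho(S_0)=\begin{pmatrix}1&0\\0&1\end{pmatrix}$, $\rho(S_1)=\begin{pmatrix}1&1\\0&-1\end{pmatrix}$, $\rho(R_2)=\begin{pmatrix}1&0\\0&\zeta^a\end{pmatrix}$.
   Context: Let $T=\begin{pmatrix}1&1\\0&1\end{pmatrix}$, $S=\begin{pmatrix}0&-1\\1&0\end{pmatrix}$, $R=ST$ in $\mathrm{PSL}_2(\mathbb{Z})$, and $\zeta=e^{2\pi i/3}$. $G$ is the index-$4$ subgroup of $\mathrm{PSL}_2(\mathbb{Z})$ generated by the principal congruence subgroup $\Gamma(4)$ together with $S$ and $\begin{pmatrix}1&1\\1&2\end{pmatrix}$; it is freely generated by $S_0=S$, $S_1=T^3ST^{-3}$ and $R_2=T^2RT^{-2}=T^2ST^{-1}$, with $S_0^2=S_1^2=R_2^3=1$. Characters of $G$: $\alpha_0(S_0)=-1$, $\alpha_0(S_1)=\alpha_0(R_2)=1$; $\alpha_1(S_1)=-1$, $\alpha_1(S_0)=\alpha_1(R_2)=1$; $\alpha_2(R_2)=\zeta$, $\alpha_2(S_0)=\alpha_2(S_1)=1$. $\chi$ is the restriction to $G$ of the character of $\mathrm{PSL}_2(\mathbb{Z})$ with $\chi(T)=e^{2\pi i/6}$ (so $\chi(S)=-1$, $\chi(R)=\zeta^2$);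 on $G$, $\chi=\alpha_0\alpha_1\alpha_2^2$. $1$ denotes the trivial character. Matrices are written in a basis whose first vector spans the trivial subrepresentation. *)

theory Defs
  imports "HOL-Analysis.Analysis"
begin

text \<open>2x2 complex matrices acting on column vectors in complex^2.
  Row index first: X $ i $ j is the (i,j) entry.\<close>
type_synonym cmat = "complex^2^2"

definition mat2 :: "complex \<Rightarrow> complex \<Rightarrow> complex \<Rightarrow> complex \<Rightarrow> cmat" where
  "mat2 a b c d = (\<chi> i j. if i = 1 then (if j = 1 then a else b) else (if j = 1 then c else d))"

definition zeta :: complex where "zeta = cis (2 * pi / 3)"

text \<open>G is freely generated by S0, S1 (order 2) and R2 (order 3), i.e. it is the free
  product Z/2 * Z/2 * Z/3.  By the universal property, a rank 2 complex representation
  of G is the same as a triple (rho(S0), rho(S1), rho(R2)) of 2x2 complex matrices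
  satisfying the defining relations.\<close>
type_synonym rep = "cmat \<times> cmat \<times> cmat"

definition is_rep :: "rep \<Rightarrow> bool" where
  "is_rep \<rho> = (case \<rho> of (A, B, C) \<Rightarrow>
      A ** A = mat 1 \<and> B ** B = mat 1 \<and> C ** C ** C = mat 1)"

definition iso_rep :: "rep \<Rightarrow> rep \<Rightarrow> bool" where
  "iso_rep \<rho> \<sigma> = (case \<rho> of (A, B, C) \<Rightarrow> case \<sigma> of (A', B', C') \<Rightarrow>
      (\<exists>P :: cmat. invertible P \<and> P ** A = A' ** P \<and> P ** B = B' ** P \<and> P ** C = C' ** P))"

definition has_trivial_sub :: "rep \<Rightarrow> bool" where
  "has_trivial_sub \<rho> = (case \<rho> of (A, B, C) \<Rightarrow>
      (\<exists>v :: complex^2. v \<noteq> 0 \<and> A *v v = v \<and> B *v v = v \<and> C *v v = v))"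

definition is_diag :: "cmat \<Rightarrow> bool" where
  "is_diag X = (X $ 1 $ 2 = 0 \<and> X $ 2 $ 1 = 0)"

text \<open>rho (of rank 2) is decomposable: it is the direct sum of two one-dimensional
  subrepresentations, i.e. in some basis all generators act diagonally.\<close>
definition decomposable :: "rep \<Rightarrow> bool" where
  "decomposable \<rho> = (case \<rho> of (A, B, C) \<Rightarrow>
      (\<exists>P :: cmat. invertible P \<and> is_diag (matrix_inv P ** A ** P)
         \<and> is_diag (matrix_inv P ** B ** P) \<and> is_diag (matrix_inv P ** C ** P)))"

definition nonsplit_ext_of_trivial :: "rep \<Rightarrow> bool" where
  "nonsplit_ext_of_trivial \<rho> = (is_rep \<rho> \<and> has_trivial_sub \<rho> \<and> \<not> decomposable \<rho>)"

text \<open>Characters of G, recorded by their values on (S0, S1, R2).\<close>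
type_synonym gchar = "complex \<times> complex \<times> complex"

definition char_mult :: "gchar \<Rightarrow> gchar \<Rightarrow> gchar" where
  "char_mult \<phi> \<psi> = (case \<phi> of (x0, x1, x2) \<Rightarrow> case \<psi> of (y0, y1, y2) \<Rightarrow>
      (x0 * y0, x1 * y1, x2 * y2))"

definition char_powi :: "gchar \<Rightarrow> int \<Rightarrow> gchar" where
  "char_powi \<phi> k = (case \<phi> of (x0, x1, x2) \<Rightarrow> (x0 powi k, x1 powi k, x2 powi k))"

definition alpha0 :: gchar where "alpha0 = (-1, 1, 1)"
definition alpha1 :: gchar where "alpha1 = (1, -1, 1)"
definition alpha2 :: gchar where "alpha2 = (1, 1, zeta)"

text \<open>chi restricted to G equals alpha0 * alpha1 * alpha2^2.\<close>
definition chiG :: gchar where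
  "chiG = char_mult (char_mult alpha0 alpha1) (char_powi alpha2 2)"

text \<open>rho is an extension 0 -> 1 -> rho -> phi -> 0 written in a basis whose first vector
  spans the trivial subrepresentation: all generators are upper triangular with
  (1,1)-entry 1 and (2,2)-entry the value of phi.\<close>
definition ext_in_basis :: "rep \<Rightarrow> gchar \<Rightarrow> bool" where
  "ext_in_basis \<rho> \<phi> = (case \<rho> of (A, B, C) \<Rightarrow> case \<phi> of (p0, p1, p2) \<Rightarrow>
      A $ 1 $ 1 = 1 \<and> A $ 2 $ 1 = 0 \<and> A $ 2 $ 2 = p0 \<and>
      B $ 1 $ 1 = 1 \<and> B $ 2 $ 1 = 0 \<and> B $ 2 $ 2 = p1 \<and>
      C $ 1 $ 1 = 1 \<and> C $ 2 $ 1 = 0 \<and> C $ 2 $ 2 = p2)"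

text \<open>Indices of the list in the proposition.  Fam2 a None is the point z = infinity.\<close>
datatype idx = Case1 | Case2 nat "complex option" | Case3 nat | Case4 nat

definition valid_idx :: "idx \<Rightarrow> bool" where
  "valid_idx i = (case i of Case1 \<Rightarrow> True
     | Case2 a _ \<Rightarrow> a \<in> {1, 5}
     | Case3 a \<Rightarrow> a \<in> {2, 4}
     | Case4 a \<Rightarrow> a \<in> {1, 5})"

fun listed_rep :: "idx \<Rightarrow> rep" where
  "listed_rep Case1 = (mat2 1 1 0 (-1), mat2 1 0 0 (-1), mat2 1 0 0 1)"
| "listed_rep (Case2 a (Some z)) = (mat2 1 1 0 (-1), mat2 1 z 0 (-1), mat2 1 0 0 (zeta ^ a))"
| "listed_rep (Case2 a None) = (mat2 1 0 0 (-1), mat2 1 1 0 (-1), mat2 1 0 0 (zeta ^ a))"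
| "listed_rep (Case3 a) = (mat2 1 1 0 (-1), mat2 1 0 0 1, mat2 1 0 0 (zeta ^ a))"
| "listed_rep (Case4 a) = (mat2 1 0 0 1, mat2 1 1 0 (-1), mat2 1 0 0 (zeta ^ a))"

fun listed_quot :: "idx \<Rightarrow> gchar" where
  "listed_quot Case1 = char_powi chiG 3"
| "listed_quot (Case2 a _) = char_powi chiG (- int a)"
| "listed_quot (Case3 a) = char_mult alpha0 (char_powi chiG (- int a))"
| "listed_quot (Case4 a) = char_mult alpha0 (char_powi chiG (- int a))"

end

theory Submission
  imports Defs
begin

text \<open>
  In a basis whose first vector is fixed by \<rho>, every generator has the form [[1, x], [0, d]].
  The relations S^2 = R^3 = 1 force the diagonal entries to be signs resp. cube roots
  of unity and constrain the off-diagonal entries. The remaining freedom is conjugation by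
  the stabiliser [[1, p], [0, s]] of the fixed line, which replaces x by p (1 - d) + s x: the
  triple of off-diagonal entries is moved by a coboundary and rescaled. Normalising gives either
  zero (a split representation) or one of the listed matrices. The listed representations are
  nonsplit because two of their generators do not commute. They are pairwise nonisomorphic
  because the diagonal entries are invariants and, when R2 acts by zeta^a \<noteq> 1, every
  intertwiner is diagonal and can only rescale the off-diagonal entries.
\<close>

lemma matrix_inv_right: "invertible (A :: 'a::semiring_1^'n^'n) \<Longrightarrow> A ** matrix_inv A = mat 1"
  unfolding invertible_def matrix_inv_def by (rule someI2_ex) auto

lemma matrix_inv_left: "invertible (A :: 'a::semiring_1^'n^'n) \<Longrightarrow> matrix_inv A ** A = mat 1"
  unfolding invertible_def matrix_inv_def by (rule someI2_ex) auto

lemma invertible_matrix_inv: "invertible (A :: 'a::semiring_1^'n^'n) \<Longrightarrow> invertible (matrix_inv A)"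
  by (metis invertible_def matrix_inv_left matrix_inv_right)

lemma matrix_inv_conj_eq:
  fixes M X Y :: "'a::semiring_1^'n^'n"
  assumes "invertible M" and "X ** M = M ** Y"
  shows "matrix_inv M ** X ** M = Y"
  by (metis assms matrix_inv_left matrix_mul_assoc matrix_mul_lid)

lemma matrix_inv_conj_mult:
  fixes M X Y :: "'a::semiring_1^'n^'n"
  assumes "invertible M"
  shows "(matrix_inv M ** X ** M) ** (matrix_inv M ** Y ** M) = matrix_inv M ** (X ** Y) ** M"
  by (metis assms matrix_inv_right matrix_mul_assoc matrix_mul_rid)

lemma intertwine_trans:
  fixes M N X Y Z :: "'a::semiring_1^'n^'n"
  shows "X ** M = M ** Y \<Longrightarrow> Y ** N = N ** Z \<Longrightarrow> X ** (M ** N) = (M ** N) ** Z"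
  by (metis matrix_mul_assoc)

lemma commute_of_conj_commute:
  fixes M X Y :: "'a::semiring_1^'n^'n"
  assumes "invertible M"
    and "(matrix_inv M ** X ** M) ** (matrix_inv M ** Y ** M)
           = (matrix_inv M ** Y ** M) ** (matrix_inv M ** X ** M)"
  shows "X ** Y = Y ** X"
proof -
  have "matrix_inv M ** (X ** Y) ** M = matrix_inv M ** (Y ** X) ** M"
    using assms by (simp add: matrix_inv_conj_mult)
  then have "M ** (matrix_inv M ** (X ** Y) ** M) ** matrix_inv M
      = M ** (matrix_inv M ** (Y ** X) ** M) ** matrix_inv M"
    by simp
  moreover have "M ** (matrix_inv M ** Z ** M) ** matrix_inv M = Z" for Z
  proof -
    have "M ** (matrix_inv M ** Z ** M) ** matrix_inv M
        = (M ** matrix_inv M) ** Z ** (M ** matrix_inv M)"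
      by (simp add: matrix_mul_assoc)
    then show ?thesis using assms(1) by (simp add: matrix_inv_right)
  qed
  ultimately show ?thesis by simp
qed

lemma iso_repI:
  assumes "invertible M" "A ** M = M ** A'" "B ** M = M ** B'" "C ** M = M ** C'"
  shows "iso_rep (A, B, C) (A', B', C')"
proof -
  have "matrix_inv M ** X = X' ** matrix_inv M" if "X ** M = M ** X'" for X X' :: cmat
    using matrix_inv_conj_eq[OF assms(1) that]
    by (metis assms(1) matrix_inv_right matrix_mul_assoc matrix_mul_rid)
  then show ?thesis
    unfolding iso_rep_def using assms invertible_matrix_inv by auto
qed

lemma decomposableI:
  assumes "invertible M" "A ** M = M ** A'" "B ** M = M ** B'" "C ** M = M ** C'"
    and "is_diag A'" "is_diag B'" "is_diag C'"
  shows "decomposable (A, B, C)"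
  unfolding decomposable_def using assms matrix_inv_conj_eq by auto

lemma is_rep_conj:
  assumes "invertible M" "A ** M = M ** A'" "B ** M = M ** B'" "C ** M = M ** C'"
    and "is_rep (A, B, C)"
  shows "is_rep (A', B', C')"
proof -
  have one: "matrix_inv M ** mat 1 ** M = mat 1"
    using assms(1) by (simp add: matrix_inv_left)
  show ?thesis
    using assms(5) one
    unfolding is_rep_def prod.case
      matrix_inv_conj_eq[OF assms(1,2), symmetric] matrix_inv_conj_eq[OF assms(1,3), symmetric]
      matrix_inv_conj_eq[OF assms(1,4), symmetric] matrix_inv_conj_mult[OF assms(1)]
    by simp
qed

lemma mat2_nth [simp]:
  "mat2 a b c d $ 1 $ 1 = a" "mat2 a b c d $ 1 $ 2 = b"
  "mat2 a b c d $ 2 $ 1 = c" "mat2 a b c d $ 2 $ 2 = d"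
  by (simp_all add: mat2_def)

lemma cmat_eq_mat2: "X = mat2 (X$1$1) (X$1$2) (X$2$1) (X$2$2)"
  unfolding mat2_def vec_eq_iff forall_2 by simp

lemma mat2_eq_iff: "mat2 a b c d = mat2 a' b' c' d' \<longleftrightarrow> a = a' \<and> b = b' \<and> c = c' \<and> d = d'"
  by (metis mat2_nth)

lemma mat2_mult:
  "mat2 a b c d ** mat2 a' b' c' d'
     = mat2 (a*a' + b*c') (a*b' + b*d') (c*a' + d*c') (c*b' + d*d')"
  unfolding matrix_matrix_mult_def vec_eq_iff forall_2 by (simp add: sum_2)

lemma mat_1_eq_mat2: "mat 1 = mat2 1 0 0 1"
  unfolding mat2_def mat_def vec_eq_iff forall_2 by simp

lemma mat2_mult_axis1: "mat2 a b c d *v axis 1 1 = (\<chi> i. if i = 1 then a else c)"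
  unfolding matrix_vector_mult_def vec_eq_iff forall_2 by (simp add: sum_2 axis_def)

lemma invertible_mat2_iff: "invertible (mat2 a b c d) \<longleftrightarrow> a * d - b * c \<noteq> 0"
  by (simp add: invertible_det_nz det_2)

lemma is_diag_commute: "is_diag X \<Longrightarrow> is_diag Y \<Longrightarrow> X ** Y = Y ** X"
  by (subst (1 2) cmat_eq_mat2[of X], subst (1 2) cmat_eq_mat2[of Y])
    (simp add: is_diag_def mat2_mult mult.commute)

lemma decomposable_imp_commute:
  assumes "decomposable (A, B, C)"
  shows "A ** B = B ** A" "A ** C = C ** A" "B ** C = C ** B"
proof -
  obtain P where P: "invertible P" "is_diag (matrix_inv P ** A ** P)"
      "is_diag (matrix_inv P ** B ** P)" "is_diag (matrix_inv P ** C ** P)"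
    using assms unfolding decomposable_def by auto
  show "A ** B = B ** A" "A ** C = C ** A" "B ** C = C ** B"
    by (rule commute_of_conj_commute[OF P(1)], rule is_diag_commute; fact)+
qed

lemma exists_invertible_axis1_image:
  assumes "v \<noteq> 0"
  obtains Q :: cmat where "invertible Q" "Q *v axis 1 1 = v"
proof (cases "v$1 = 0")
  case True
  then have "v$2 \<noteq> 0" using assms by (auto simp: vec_eq_iff forall_2)
  then have "invertible (mat2 0 1 (v$2) 0)" by (simp add: invertible_mat2_iff)
  moreover have "mat2 0 1 (v$2) 0 *v axis 1 1 = v"
    using True by (simp add: mat2_mult_axis1 vec_eq_iff forall_2)
  ultimately show ?thesis by (rule that)
next
  case False
  then have "invertible (mat2 (v$1) 0 (v$2) 1)" by (simp add: invertible_mat2_iff)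
  moreover have "mat2 (v$1) 0 (v$2) 1 *v axis 1 1 = v"
    by (simp add: mat2_mult_axis1 vec_eq_iff forall_2)
  ultimately show ?thesis by (rule that)
qed

subsection \<open>Matrices fixing the first basis vector\<close>

abbreviation utri :: "complex \<Rightarrow> complex \<Rightarrow> cmat" where
  "utri x d \<equiv> mat2 1 x 0 d"

lemma utri_mult: "utri x d ** utri y e = utri (y + x * e) (d * e)"
  by (simp add: mat2_mult)

lemma utri_commute_iff: "utri x d ** utri y e = utri y e ** utri x d \<longleftrightarrow> x * (e - 1) = y * (d - 1)"
  by (simp add: utri_mult mat2_eq_iff algebra_simps mult.commute)

lemma utri_square_eq_1_iff: "utri x d ** utri x d = mat 1 \<longleftrightarrow> d * d = 1 \<and> x * (1 + d) = 0"
  by (auto simp: utri_mult mat_1_eq_mat2 mat2_eq_iff algebra_simps)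

lemma utri_cube_eq_1_iff:
  "utri x d ** utri x d ** utri x d = mat 1 \<longleftrightarrow> d ^ 3 = 1 \<and> x * (1 + d + d * d) = 0"
  by (auto simp: utri_mult mat_1_eq_mat2 mat2_eq_iff algebra_simps power3_eq_cube)

lemma is_rep_utri_iff:
  "is_rep (utri a \<alpha>, utri b \<beta>, utri c \<gamma>)
     \<longleftrightarrow> \<alpha> * \<alpha> = 1 \<and> a * (1 + \<alpha>) = 0 \<and> \<beta> * \<beta> = 1 \<and> b * (1 + \<beta>) = 0
       \<and> \<gamma> ^ 3 = 1 \<and> c * (1 + \<gamma> + \<gamma> * \<gamma>) = 0"
  unfolding is_rep_def prod.case utri_square_eq_1_iff utri_cube_eq_1_iff by blast

lemma fixes_axis1_iff: "(X :: cmat) *v axis 1 1 = axis 1 1 \<longleftrightarrow> X $ 1 $ 1 = 1 \<and> X $ 2 $ 1 = 0"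
  unfolding matrix_vector_mult_def vec_eq_iff forall_2 by (simp add: sum_2 axis_def)

lemma fixed_vector_imp_utri_conj:
  fixes Q X :: cmat
  assumes Q: "invertible Q" "Q *v axis 1 1 = v" and X: "X *v v = v"
  obtains x d where "X ** Q = Q ** utri x d"
proof -
  let ?Y = "matrix_inv Q ** X ** Q"
  have "?Y *v axis 1 1 = matrix_inv Q *v (X *v (Q *v axis 1 1))"
    by (simp add: matrix_vector_mul_assoc matrix_mul_assoc)
  also have "\<dots> = matrix_inv Q *v (Q *v axis 1 1)"
    using Q(2) X by simp
  also have "\<dots> = axis 1 1"
    using Q(1) by (simp add: matrix_vector_mul_assoc matrix_inv_left)
  finally have fix_axis1: "?Y $ 1 $ 1 = 1" "?Y $ 2 $ 1 = 0"
    by (simp_all add: fixes_axis1_iff)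
  have "X ** Q = Q ** ?Y"
    using Q(1) by (simp add: matrix_mul_assoc matrix_inv_right)
  also have "?Y = mat2 (?Y$1$1) (?Y$1$2) (?Y$2$1) (?Y$2$2)"
    by (rule cmat_eq_mat2)
  finally show ?thesis
    using fix_axis1 that by simp
qed

lemma upper_triangularize:
  assumes "has_trivial_sub (A, B, C)"
  obtains Q a \<alpha> b \<beta> c \<gamma> where "invertible Q"
    "A ** Q = Q ** utri a \<alpha>" "B ** Q = Q ** utri b \<beta>" "C ** Q = Q ** utri c \<gamma>"
proof -
  obtain v where v: "v \<noteq> 0" "A *v v = v" "B *v v = v" "C *v v = v"
    using assms unfolding has_trivial_sub_def prod.case by blast
  obtain Q :: cmat where Q: "invertible Q" "Q *v axis 1 1 = v"
    using exists_invertible_axis1_image[OF v(1)] by blast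
  obtain a \<alpha> where A: "A ** Q = Q ** utri a \<alpha>"
    using fixed_vector_imp_utri_conj[OF Q v(2)] .
  obtain b \<beta> where B: "B ** Q = Q ** utri b \<beta>"
    using fixed_vector_imp_utri_conj[OF Q v(3)] .
  obtain c \<gamma> where C: "C ** Q = Q ** utri c \<gamma>"
    using fixed_vector_imp_utri_conj[OF Q v(4)] .
  show ?thesis
    using that[OF Q(1) A B C] .
qed

definition utri_shift :: "complex \<Rightarrow> complex \<Rightarrow> complex \<Rightarrow> complex \<Rightarrow> complex" where
  "utri_shift p s x d = p * (1 - d) + x * s"

lemma utri_mult_utri_shift: "utri x d ** utri p s = utri p s ** utri (utri_shift p s x d) d"
  by (simp add: utri_mult utri_shift_def mat2_eq_iff algebra_simps)

subsection \<open>The cube root of unity\<close>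

lemma zeta_eq_Complex: "zeta = Complex (-1/2) (sqrt 3 / 2)"
  unfolding zeta_def by (simp add: complex_eq_iff cos_120 sin_120)

lemma zeta_sq_eq_Complex: "zeta^2 = Complex (-1/2) (- sqrt 3 / 2)"
  unfolding zeta_eq_Complex by (simp add: power2_eq_square complex_eq_iff)

lemma one_plus_zeta_plus_zeta_sq: "1 + zeta + zeta^2 = 0"
  unfolding zeta_sq_eq_Complex by (simp add: zeta_eq_Complex complex_eq_iff)

lemma zeta_cube: "zeta^3 = 1"
proof -
  have "zeta^3 - 1 = (zeta - 1) * (1 + zeta + zeta^2)"
    by (simp add: algebra_simps power2_eq_square power3_eq_cube)
  then show ?thesis using one_plus_zeta_plus_zeta_sq by simp
qed

lemma zeta_pow_mod: "zeta ^ n = zeta ^ (n mod 3)"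
proof -
  have "zeta ^ n = zeta ^ (3 * (n div 3) + n mod 3)" by simp
  also have "\<dots> = (zeta ^ 3) ^ (n div 3) * zeta ^ (n mod 3)" by (simp only: power_add power_mult)
  finally show ?thesis by (simp add: zeta_cube)
qed

lemma zeta_pow_4 [simp]: "zeta^4 = zeta"
  using zeta_pow_mod[of 4] by simp

lemma zeta_pow_5 [simp]: "zeta^5 = zeta^2"
  using zeta_pow_mod[of 5] by simp

lemma zeta_neq [simp]: "zeta \<noteq> 1" "zeta^2 \<noteq> 1" "zeta \<noteq> zeta^2" "zeta^2 \<noteq> zeta"
  unfolding zeta_sq_eq_Complex by (simp_all add: zeta_eq_Complex complex_eq_iff)

lemma zeta_pow_eq_1_iff [simp]: "zeta ^ n = 1 \<longleftrightarrow> 3 dvd n"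
proof -
  have "n mod 3 = 0 \<or> n mod 3 = 1 \<or> n mod 3 = 2" by auto
  then show ?thesis by (subst zeta_pow_mod) (auto simp: dvd_eq_mod_eq_0)
qed

lemma cube_root_of_unity_cases:
  assumes "(g::complex)^3 = 1"
  shows "g = 1 \<or> g = zeta \<or> g = zeta^2"
proof -
  have "(g - 1) * (g - zeta) * (g - zeta^2)
      = g^3 - (1 + zeta + zeta^2) * g^2 + zeta * (1 + zeta + zeta^2) * g - zeta^3"
    by (simp add: algebra_simps power2_eq_square power3_eq_cube)
  also have "\<dots> = 0" using assms one_plus_zeta_plus_zeta_sq zeta_cube by simp
  finally show ?thesis by auto
qed

lemma power_int_minus_of_nat: "(x::'a::division_ring) powi (- int n) = inverse x ^ n"
  by (simp add: power_int_minus power_inverse)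

lemma chiG_eq: "chiG = (-1, -1, zeta^2)"
  unfolding chiG_def char_mult_def char_powi_def alpha0_def alpha1_def alpha2_def by simp

lemma char_powi_chiG_neg: "char_powi chiG (- int a) = ((-1)^a, (-1)^a, zeta^a)"
proof -
  have "inverse (zeta^2) = zeta"
    using zeta_cube by (intro inverse_unique) (simp add: power2_eq_square power3_eq_cube)
  then show ?thesis unfolding chiG_eq char_powi_def by (simp add: power_int_minus_of_nat)
qed

lemma char_powi_chiG_3: "char_powi chiG 3 = (-1, -1, 1)"
proof -
  have "(zeta^2) ^ 3 = 1"
    by (metis power_mult mult.commute power_one zeta_cube)
  then show ?thesis unfolding chiG_eq char_powi_def by (simp add: power_int_numeral)
qed

subsection \<open>Normal forms\<close>

lemma listed_rep_of_cocycle: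
  assumes \<gamma>: "\<gamma> = zeta \<or> \<gamma> = zeta^2" and \<alpha>: "\<alpha> = 1 \<or> \<alpha> = -1" and \<beta>: "\<beta> = 1 \<or> \<beta> = -1"
    and "\<alpha> = 1 \<Longrightarrow> x = 0" "\<beta> = 1 \<Longrightarrow> y = 0" and "x \<noteq> 0 \<or> y \<noteq> 0"
  obtains s i where "s \<noteq> 0" "valid_idx i" "listed_rep i = (utri (s * x) \<alpha>, utri (s * y) \<beta>, utri 0 \<gamma>)"
proof -
  obtain m n where m: "m \<in> {1, 5}" "zeta ^ m = \<gamma>" and n: "n \<in> {2, 4}" "zeta ^ n = \<gamma>"
    using \<gamma> zeta_pow_4 zeta_pow_5 by (metis insertI1 insertI2 power_one_right)
  show ?thesis
  proof (cases "x = 0")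
    case False
    then have "\<alpha> = -1" using assms by auto
    consider "\<beta> = -1" | "\<beta> = 1" "y = 0" using assms by auto
    then show ?thesis
    proof cases
      case 1
      then show ?thesis
        using that[of "1/x" "Case2 m (Some (y/x))"] False m \<open>\<alpha> = -1\<close> by (simp add: valid_idx_def)
    next
      case 2
      then show ?thesis
        using that[of "1/x" "Case3 n"] False n \<open>\<alpha> = -1\<close> by (simp add: valid_idx_def)
    qed
  next
    case True
    then have "y \<noteq> 0" "\<beta> = -1" using assms by auto
    consider "\<alpha> = -1" | "\<alpha> = 1" using \<alpha> by auto
    then show ?thesis
    proof cases
      case 1
      then show ?thesis
        using that[of "1/y" "Case2 m None"] True \<open>y \<noteq> 0\<close> \<open>\<beta> = -1\<close> m by (simp add: valid_idx_def)
    next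
      case 2
      then show ?thesis
        using that[of "1/y" "Case4 m"] True \<open>y \<noteq> 0\<close> \<open>\<beta> = -1\<close> m by (simp add: valid_idx_def)
    qed
  qed
qed

lemma utri_normal_form:
  assumes \<alpha>: "\<alpha> = 1 \<or> \<alpha> = -1" and \<beta>: "\<beta> = 1 \<or> \<beta> = -1"
    and a: "a * (1 + \<alpha>) = 0" and b: "b * (1 + \<beta>) = 0"
    and \<gamma>: "\<gamma> = 1 \<or> \<gamma> = zeta \<or> \<gamma> = zeta^2" and c: "\<gamma> = 1 \<Longrightarrow> c = 0"
  obtains (split) p s where "s \<noteq> 0"
      "utri_shift p s a \<alpha> = 0" "utri_shift p s b \<beta> = 0" "utri_shift p s c \<gamma> = 0"
    | (listed) p s i where "s \<noteq> 0" "valid_idx i"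
      "listed_rep i = (utri (utri_shift p s a \<alpha>) \<alpha>, utri (utri_shift p s b \<beta>) \<beta>,
                       utri (utri_shift p s c \<gamma>) \<gamma>)"
proof (cases "\<gamma> = 1")
  case False
  define k where "k = c / (\<gamma> - 1)"
  define x y where "x = k * (1 - \<alpha>) + a" and "y = k * (1 - \<beta>) + b"
  have shift: "utri_shift (k * s) s c \<gamma> = 0" "utri_shift (k * s) s a \<alpha> = s * x"
    "utri_shift (k * s) s b \<beta> = s * y" for s
    using False by (auto simp: utri_shift_def k_def x_def y_def field_simps)
  show ?thesis
  proof (cases "x \<noteq> 0 \<or> y \<noteq> 0")
    case True
    have "\<gamma> = zeta \<or> \<gamma> = zeta^2" using \<gamma> \<open>\<gamma> \<noteq> 1\<close> by simp
    moreover have "\<alpha> = 1 \<Longrightarrow> x = 0" "\<beta> = 1 \<Longrightarrow> y = 0"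
      using a b by (simp_all add: x_def y_def)
    ultimately obtain s i where "s \<noteq> 0" "valid_idx i"
        "listed_rep i = (utri (s * x) \<alpha>, utri (s * y) \<beta>, utri 0 \<gamma>)"
      using listed_rep_of_cocycle \<alpha> \<beta> True by blast
    then show ?thesis using listed[where p = "k * s"] shift by simp
  next
    case False
    then show ?thesis using split[where p = k and s = 1] shift[of 1] by simp
  qed
next
  case True
  then have shift_c: "utri_shift p s c \<gamma> = 0" for p s
    using c by (simp add: utri_shift_def)
  show ?thesis
  proof (cases "\<alpha> = -1 \<and> \<beta> = -1 \<and> a \<noteq> b")
    case True
    let ?s = "1 / (a - b)"
    have shift_a: "utri_shift (- b * t / 2) t a \<alpha> = (a - b) * t"
      and shift_b: "utri_shift (- b * t / 2) t b \<beta> = 0" for t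
      using True by (simp_all add: utri_shift_def field_simps)
    have "utri_shift (- b * ?s / 2) ?s a \<alpha> = (a - b) * ?s" by (rule shift_a)
    also have "\<dots> = 1" using True by simp
    finally have "utri_shift (- b * ?s / 2) ?s a \<alpha> = 1" .
    then show ?thesis
      using listed[where p = "- b * ?s / 2" and s = ?s and i = Case1] shift_b[of ?s] shift_c
        True \<open>\<gamma> = 1\<close>
      by (simp add: valid_idx_def)
  next
    case False
    let ?p = "- (if \<alpha> = -1 then a else b) / 2"
    have "utri_shift ?p 1 a \<alpha> = 0" "utri_shift ?p 1 b \<beta> = 0"
      using False \<alpha> \<beta> a b by (auto simp: utri_shift_def)
    then show ?thesis using split[where p = ?p and s = 1] shift_c by simp
  qed
qed

theorem nonsplit_iso_listed_rep:
  assumes "nonsplit_ext_of_trivial (A, B, C)"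
  obtains i where "valid_idx i" "iso_rep (A, B, C) (listed_rep i)"
proof -
  obtain Q a \<alpha> b \<beta> c \<gamma> where Q: "invertible Q"
    "A ** Q = Q ** utri a \<alpha>" "B ** Q = Q ** utri b \<beta>" "C ** Q = Q ** utri c \<gamma>"
    using assms upper_triangularize unfolding nonsplit_ext_of_trivial_def by blast
  have "is_rep (utri a \<alpha>, utri b \<beta>, utri c \<gamma>)"
    using is_rep_conj[OF Q] assms unfolding nonsplit_ext_of_trivial_def by blast
  then have rel: "\<alpha> = 1 \<or> \<alpha> = -1" "\<beta> = 1 \<or> \<beta> = -1" "a * (1 + \<alpha>) = 0" "b * (1 + \<beta>) = 0"
      "\<gamma> = 1 \<or> \<gamma> = zeta \<or> \<gamma> = zeta^2" "\<gamma> = 1 \<Longrightarrow> c = 0"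
    unfolding is_rep_utri_iff square_eq_1_iff by (auto dest: cube_root_of_unity_cases)
  have conj: "X ** Q = Q ** utri x d \<Longrightarrow>
      X ** (Q ** utri p s) = (Q ** utri p s) ** utri (utri_shift p s x d) d" for X x d p s
    using intertwine_trans utri_mult_utri_shift by blast
  have inv: "s \<noteq> 0 \<Longrightarrow> invertible (Q ** utri p s)" for p s
    using Q(1) by (simp add: invertible_mult invertible_mat2_iff)
  show ?thesis
  proof (rule utri_normal_form[OF rel])
    fix p s
    assume "s \<noteq> 0" "utri_shift p s a \<alpha> = 0" "utri_shift p s b \<beta> = 0" "utri_shift p s c \<gamma> = 0"
    then have "decomposable (A, B, C)"
      using decomposableI[OF inv conj[OF Q(2)] conj[OF Q(3)] conj[OF Q(4)]]
      by (simp add: is_diag_def)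
    then show ?thesis using assms unfolding nonsplit_ext_of_trivial_def by blast
  next
    fix p s i
    assume "s \<noteq> 0" "valid_idx i"
      "listed_rep i = (utri (utri_shift p s a \<alpha>) \<alpha>, utri (utri_shift p s b \<beta>) \<beta>,
                       utri (utri_shift p s c \<gamma>) \<gamma>)"
    then show ?thesis
      using that iso_repI[OF inv conj[OF Q(2)] conj[OF Q(3)] conj[OF Q(4)]] by metis
  qed
qed

subsection \<open>The listed representations\<close>

lemma nonsplit_ext_of_trivial_utriI:
  assumes "is_rep (utri a \<alpha>, utri b \<beta>, utri c \<gamma>)"
    and "\<not> (a * (\<beta> - 1) = b * (\<alpha> - 1) \<and> a * (\<gamma> - 1) = c * (\<alpha> - 1) \<and> b * (\<gamma> - 1) = c * (\<beta> - 1))"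
  shows "nonsplit_ext_of_trivial (utri a \<alpha>, utri b \<beta>, utri c \<gamma>)"
proof -
  have "utri x d *v axis 1 1 = axis 1 1" for x d
    by (simp add: fixes_axis1_iff)
  then have "has_trivial_sub (utri a \<alpha>, utri b \<beta>, utri c \<gamma>)"
    unfolding has_trivial_sub_def prod.case by (intro exI[of _ "axis 1 1"]) simp
  moreover have "\<not> decomposable (utri a \<alpha>, utri b \<beta>, utri c \<gamma>)"
  proof
    assume "decomposable (utri a \<alpha>, utri b \<beta>, utri c \<gamma>)"
    from decomposable_imp_commute[OF this] show False
      using assms(2) by (simp add: utri_commute_iff)
  qed
  ultimately show ?thesis using assms(1) unfolding nonsplit_ext_of_trivial_def by blast
qed

lemma listed_rep_nonsplit: "valid_idx i \<Longrightarrow> nonsplit_ext_of_trivial (listed_rep i)"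
  by (cases i rule: listed_rep.cases)
    (auto simp: valid_idx_def is_rep_utri_iff intro!: nonsplit_ext_of_trivial_utriI)

lemma listed_rep_ext_in_basis: "valid_idx i \<Longrightarrow> ext_in_basis (listed_rep i) (listed_quot i)"
  by (cases i rule: listed_rep.cases)
    (auto simp: valid_idx_def ext_in_basis_def char_powi_chiG_neg char_powi_chiG_3
      char_mult_def alpha0_def)

lemma intertwine_utri_diag_eq:
  assumes "det P \<noteq> 0" and "P ** utri x d = utri y e ** P"
  shows "d = e"
proof -
  obtain p q r s where P: "P = mat2 p q r s" using cmat_eq_mat2 by blast
  have det: "p * s - q * r \<noteq> 0" using assms(1) by (simp add: P det_2)
  have eq: "y * r = 0" "r = e * r" "r * x + s * d = e * s" "p * x + q * d = q + y * s"
    using assms(2) by (simp_all add: P mat2_mult mat2_eq_iff algebra_simps)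
  show ?thesis
  proof (cases "r = 0")
    case True
    then have "s * (d - e) = 0" using eq(3) by (simp add: algebra_simps)
    then show ?thesis using det True by simp
  next
    case False
    then have "e = 1" "y = 0" using eq(1,2) by auto
    then have rx: "r * x = s - s * d" and px: "p * x = q - q * d"
      using eq(3,4) by (simp_all add: algebra_simps)
    have "(1 - d) * (p * s - q * r) = p * (s - s * d) - r * (q - q * d)"
      by (simp add: algebra_simps)
    also have "\<dots> = p * (r * x) - r * (p * x)" by (simp only: rx px)
    also have "\<dots> = 0" by (simp add: algebra_simps)
    finally show ?thesis using det \<open>e = 1\<close> by simp
  qed
qed

lemma commute_diag_imp_is_diag:
  assumes "P ** utri 0 g = utri 0 g ** P" and "g \<noteq> 1"
  shows "is_diag P"
proof -
  obtain p q r s where P: "P = mat2 p q r s" using cmat_eq_mat2 by blast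
  have "q * (g - 1) = 0" "r * (g - 1) = 0"
    using assms(1) by (simp_all add: P mat2_mult mat2_eq_iff algebra_simps)
  then show ?thesis using assms(2) by (simp add: P is_diag_def)
qed

lemma iso_rep_utri_invariants:
  assumes "iso_rep (utri x1 d1, utri x2 d2, utri 0 d3) (utri y1 e1, utri y2 e2, utri 0 e3)"
  shows "d1 = e1 \<and> d2 = e2 \<and> d3 = e3
    \<and> (d3 \<noteq> 1 \<longrightarrow> (\<exists>t. t \<noteq> 0 \<and> y1 = t * x1 \<and> y2 = t * x2))"
proof -
  obtain P where P: "invertible P" "P ** utri x1 d1 = utri y1 e1 ** P"
    "P ** utri x2 d2 = utri y2 e2 ** P" "P ** utri 0 d3 = utri 0 e3 ** P"
    using assms unfolding iso_rep_def by auto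
  have det: "det P \<noteq> 0" using P(1) by (simp add: invertible_det_nz)
  have diag: "d1 = e1" "d2 = e2" "d3 = e3"
    using intertwine_utri_diag_eq[OF det] P(2-4) by blast+
  have "\<exists>t. t \<noteq> 0 \<and> y1 = t * x1 \<and> y2 = t * x2" if "d3 \<noteq> 1"
  proof -
    have "is_diag P" using commute_diag_imp_is_diag P(4) diag(3) that by simp
    then obtain p s where Pps: "P = mat2 p 0 0 s" by (metis cmat_eq_mat2 is_diag_def)
    then have "p \<noteq> 0" "s \<noteq> 0" using det by (auto simp: det_2)
    moreover have "p * x1 = y1 * s" "p * x2 = y2 * s"
      using P(2,3) by (simp_all add: Pps mat2_mult mat2_eq_iff mult.commute)
    ultimately show ?thesis by (intro exI[of _ "p / s"]) (auto simp: field_simps)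
  qed
  then show ?thesis using diag by blast
qed

lemma listed_rep_iso_imp_eq:
  assumes "valid_idx i" "valid_idx j" "iso_rep (listed_rep i) (listed_rep j)"
  shows "i = j"
  using assms
  by (cases i rule: listed_rep.cases; cases j rule: listed_rep.cases)
    (auto simp: valid_idx_def dest!: iso_rep_utri_invariants)

theorem proposition6p3:
  shows "(\<forall>i. valid_idx i \<longrightarrow>
            nonsplit_ext_of_trivial (listed_rep i) \<and> ext_in_basis (listed_rep i) (listed_quot i))
       \<and> (\<forall>\<rho>. nonsplit_ext_of_trivial \<rho> \<longrightarrow> (\<exists>i. valid_idx i \<and> iso_rep \<rho> (listed_rep i)))
       \<and> (\<forall>i j. valid_idx i \<longrightarrow> valid_idx j \<longrightarrow> iso_rep (listed_rep i) (listed_rep j) \<longrightarrow> i = j)"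
  using listed_rep_nonsplit listed_rep_ext_in_basis nonsplit_iso_listed_rep listed_rep_iso_imp_eq
  by (metis prod_cases3)

end
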